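(* For every integer $n\ge 0$, $c_{11}(11n+5)\equiv c_{11}(11n+7)\equiv c_{11}(11n+9)\equiv 0\pmod 2$.
   Context: A partition of $n\ge 0$ is a finite multiset of positive integers summing to $n$. For $n\ge 0$, $c_{11}(n)$ denotes the number of pairs $(j,\lambda)$, where $j\ge 1$ is an integer and $\lambda$ is a partition of $n$, such that: each of the odd integers $1,3,\dots,2j-1$ appears in $\lambda$ at least once; odd parts are otherwise unrestricted in multiplicity; every even part of $\lambda$ is greater than $2j$; and the even parts of $\lambda$ are distinct. (A single partition is counted once for each $j$ for which these conditions hold.) *)

theory Defs
  imports Main "HOL-Library.Multiset"
begin

definition is_partition :: "nat \<Rightarrow> nat multiset \<Rightarrow> bool" where
  "is_partition n lam \<longleftrightarrow> (\<forall>p \<in># lam. p > 0) \<and> sum_mset lam = n"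

definition c11_cond :: "nat \<Rightarrow> nat multiset \<Rightarrow> bool" where
  "c11_cond j lam \<longleftrightarrow>
     j \<ge> 1 \<and>
     (\<forall>i \<in> {1..j}. 2 * i - 1 \<in># lam) \<and>
     (\<forall>p \<in># lam. even p \<longrightarrow> p > 2 * j) \<and>
     (\<forall>p \<in># lam. even p \<longrightarrow> count lam p = 1)"

definition c11 :: "nat \<Rightarrow> nat" where
  "c11 n = card {(j, lam). is_partition n lam \<and> c11_cond j lam}"

end

theory Submission
  imports Defs "HOL-Computational_Algebra.Formal_Power_Series" "HOL-Library.Z2"
begin

text \<open>Sort the pairs by \<open>j\<close>. For fixed \<open>j\<close> the generating function of the admissible
  partitions is \<open>q^(j^2)\<close> times the product of \<open>1/(1 - q^k)\<close> over odd \<open>k\<close> and of \<open>1 + q^k\<close>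
  over even \<open>k > 2j\<close>. Modulo 2, Euler's identity \<open>\<Sum>\<^sub>j q^(j^2)/(q^2;q^2)\<^sub>j = (-q;q^2)\<^sub>\<infinity>\<close>
  collapses the sum over \<open>j\<close> to \<open>\<Phi>^2 + \<Phi>^3\<close>, where \<open>\<Phi> = (q;q)\<^sub>\<infinity>\<close>. The Jacobi triple
  product with \<open>q\<close> replaced by \<open>q^3\<close> and by \<open>q^4\<close> shows that modulo 2 the series \<open>\<Phi>^2\<close> and
  \<open>\<Phi>^3\<close> are supported on the numbers \<open>(d+1)(3d+2)\<close> and \<open>(d+1)(2d+1)\<close>, \<open>d \<in> \<int>\<close>, none of
  which is 5, 7 or 9 modulo 11. All infinite products are replaced by finite ones, which suffices
  since only congruences modulo \<open>X^(n+1)\<close> are needed.\<close>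

unbundle fps_syntax

section \<open>Gaussian polynomials and a finite Jacobi triple product\<close>

fun qbinomial :: "'a::comm_ring_1 \<Rightarrow> nat \<Rightarrow> nat \<Rightarrow> 'a" where
  "qbinomial q 0 i = (if i = 0 then 1 else 0)"
| "qbinomial q (Suc n) i =
     (if i = 0 then 1 else qbinomial q n i + q ^ (Suc n - i) * qbinomial q n (i - 1))"

lemma qbinomial_eq_0: "n < i \<Longrightarrow> qbinomial q n i = 0"
  by (induction n arbitrary: i) auto

lemma qbinomial_0_right [simp]: "qbinomial q n 0 = 1"
  by (cases n) auto

lemma qbinomial_diag [simp]: "qbinomial q n n = 1"
  by (induction n) (auto simp: qbinomial_eq_0)

text \<open>The quotient formula \<open>[n,i] = [n,i-1] (1 - q^(n+1-i)) / (1 - q^i)\<close>, multiplied out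
  because \<open>1 - q^i\<close> need not be invertible.\<close>

lemma qbinomial_ratio:
  "1 \<le> i \<Longrightarrow> (1 - q^i) * qbinomial q n i = (1 - q^(Suc n - i)) * qbinomial q n (i - 1)"
proof (induction n arbitrary: i)
  case 0
  then show ?case by (cases "i = 1") auto
next
  case (Suc n)
  consider "Suc n < i" | "i = Suc n" | "i \<le> n" by linarith
  then have top: "(1 - q^i) * qbinomial q (Suc n) i = (1 - q^(Suc n)) * qbinomial q n (i - 1)"
    if "i \<le> Suc n"
  proof cases
    case 3
    have "(1 - q^i) * qbinomial q (Suc n) i
        = (1 - q^i) * qbinomial q n i + (1 - q^i) * q^(Suc n - i) * qbinomial q n (i - 1)"
      using Suc.prems by (simp add: algebra_simps)
    also have "\<dots> = (1 - q^(Suc n - i)) * qbinomial q n (i - 1)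
        + (1 - q^i) * q^(Suc n - i) * qbinomial q n (i - 1)"
      using Suc.IH[OF Suc.prems] by simp
    also have "\<dots> = (1 - q^i * q^(Suc n - i)) * qbinomial q n (i - 1)"
      by (simp add: algebra_simps)
    also have "q^i * q^(Suc n - i) = q^(Suc n)"
      using 3 by (simp flip: power_add)
    finally show ?thesis .
  qed (use that in \<open>auto simp: qbinomial_eq_0\<close>)
  show ?case
  proof (cases "Suc n < i \<or> i = 1")
    case True
    then show ?thesis using top by (auto simp: qbinomial_eq_0)
  next
    case False
    with Suc.prems have i: "2 \<le> i" "i \<le> Suc n" by auto
    define a where "a = Suc (Suc n) - i"
    have pascal: "(1 - q^a) * qbinomial q (Suc n) (i - 1)
        = (1 - q^a) * qbinomial q n (i - 1) + q^a * ((1 - q^a) * qbinomial q n (i - 2))"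
      using i unfolding a_def by (cases i) (auto simp: algebra_simps)
    have ih: "(1 - q^a) * qbinomial q n (i - 2) = (1 - q^(i - 1)) * qbinomial q n (i - 1)"
      using Suc.IH[of "i - 1"] i unfolding a_def by (simp add: Suc_diff_le numeral_2_eq_2)
    have exp: "q^a * q^(i - 1) = q^(Suc n)"
      using i unfolding a_def by (simp flip: power_add)
    have "(1 - q^a) * qbinomial q (Suc n) (i - 1) = (1 - q^a * q^(i - 1)) * qbinomial q n (i - 1)"
      unfolding pascal ih by (simp add: algebra_simps)
    then have "(1 - q^a) * qbinomial q (Suc n) (i - 1) = (1 - q^(Suc n)) * qbinomial q n (i - 1)"
      unfolding exp .
    then show ?thesis using top i unfolding a_def by simp
  qed
qed

lemma qbinomial_Suc_dual:
  assumes "1 \<le> i"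
  shows "qbinomial q (Suc n) i = q^i * qbinomial q n i + qbinomial q n (i - 1)"
proof -
  have "qbinomial q (Suc n) i = qbinomial q n i + q^(Suc n - i) * qbinomial q n (i - 1)"
    using assms by simp
  with qbinomial_ratio[OF assms, of q n] show ?thesis
    by (simp add: algebra_simps)
qed

lemma Suc_choose_two: "Suc i choose 2 = (i choose 2) + i"
  by (simp add: numeral_2_eq_2)

lemma double_choose_two: "2 * (i choose 2) + i = i * i"
  by (induction i) (simp_all add: Suc_choose_two)

theorem qbinomial_theorem:
  "(\<Prod>k<N. 1 + a * q^k) = (\<Sum>i\<le>N. a^i * q^(i choose 2) * qbinomial q N i)"
proof (induction N)
  case 0
  then show ?case by (simp add: binomial_eq_0)
next
  case (Suc N)
  let ?t = "\<lambda>n i. a^i * q^(i choose 2) * qbinomial q n i"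
  have shift: "(\<Sum>i\<le>N. ?t N i) * (a * q^N)
      = (\<Sum>i\<le>N. a^(Suc i) * q^(Suc i choose 2) * (q^(Suc N - Suc i) * qbinomial q N i))"
    unfolding sum_distrib_right
  proof (rule sum.cong[OF refl])
    fix i assume "i \<in> {..N}"
    then have "q^(i choose 2) * q^N = q^(Suc i choose 2) * q^(Suc N - Suc i)"
      by (simp add: Suc_choose_two flip: power_add)
    then show "?t N i * (a * q^N)
        = a^(Suc i) * q^(Suc i choose 2) * (q^(Suc N - Suc i) * qbinomial q N i)"
      by (simp add: algebra_simps)
  qed
  have "(\<Sum>i\<le>Suc N. ?t (Suc N) i)
      = 1 + (\<Sum>i\<le>N. ?t N (Suc i))
          + (\<Sum>i\<le>N. a^(Suc i) * q^(Suc i choose 2) * (q^(Suc N - Suc i) * qbinomial q N i))"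
    by (subst sum.atMost_Suc_shift) (simp add: binomial_eq_0 sum.distrib algebra_simps)
  also have "1 + (\<Sum>i\<le>N. ?t N (Suc i)) = (\<Sum>i\<le>Suc N. ?t N i)"
    by (simp only: sum.atMost_Suc_shift[of _ N]) (simp add: binomial_eq_0)
  also have "\<dots> = (\<Sum>i\<le>N. ?t N i)"
    by (simp add: qbinomial_eq_0)
  finally show ?case
    using shift Suc.IH by (simp add: algebra_simps)
qed

definition tri :: "int \<Rightarrow> nat" where
  "tri d = nat (d * (d + 1) div 2)"

lemma double_tri: "2 * int (tri d) = d * (d + 1)"
proof -
  have "even (d * (d + 1))" by simp
  moreover have "d * (d + 1) \<ge> 0"
    by (cases "d \<ge> 0") (auto simp: zero_le_mult_iff)
  ultimately show ?thesis
    unfolding tri_def by simp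
qed

lemma tri_choose_two: "tri (int i) = (i choose 2) + i"
proof -
  have "2 * int (tri (int i)) = 2 * int ((i choose 2) + i)"
    using double_choose_two[of i] by (simp add: double_tri algebra_simps flip: of_nat_mult)
  then show ?thesis by simp
qed

lemma tri_pred_add:
  assumes "0 \<le> m" "0 \<le> d + m"
  shows "tri (d - 1) + nat (d + m) = tri d + nat m"
proof -
  have "2 * (int (tri (d - 1)) + (d + m)) = 2 * (int (tri d) + m)"
    unfolding distrib_left double_tri by (simp add: algebra_simps)
  then show ?thesis using assms by simp
qed

lemma tri_ge_abs: "\<bar>d\<bar> - 1 \<le> int (tri d)"
proof -
  have "2 * \<bar>d\<bar> - 2 \<le> d * (d + 1)"
  proof (cases "d \<ge> 0")
    case True
    then have "0 \<le> (d - 1) * (d - 1)" by simp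
    then show ?thesis using True by (simp add: algebra_simps)
  next
    case False
    then have "0 \<le> (d + 1) * (d + 2)"
      by (cases "d = -1") (auto intro: mult_nonpos_nonpos)
    then show ?thesis using False by (simp add: algebra_simps)
  qed
  then show ?thesis using double_tri[of d] by linarith
qed

lemma theta_sum_mult_step:
  "(\<Sum>i\<le>N. z^i * q^(tri (int i - int m)) * qbinomial q N i) * (z + q^m)
     = (\<Sum>i\<le>Suc N. z^i * q^(tri (int i - int m - 1)) * qbinomial q (Suc N) i)"
proof -
  have shift_tri: "tri (int (Suc i) - int m - 1) = tri (int i - int m)" for i
    by simp
  have tri_step: "tri (int i - int m - 1) + i = tri (int i - int m) + m" for i
    using tri_pred_add[of "int m" "int i - int m"] by simp
  define S1 where "S1 = (\<Sum>i\<le>N. z^(Suc i) * q^(tri (int i - int m)) * qbinomial q N i)"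
  define S2 where
    "S2 = (\<Sum>i\<le>N. z^(Suc i) * q^(tri (int i - int m) + Suc i) * qbinomial q N (Suc i))"
  have "(\<Sum>i\<le>N. z^i * q^(tri (int i - int m)) * qbinomial q N i) * (z + q^m)
      = S1 + (\<Sum>i\<le>N. z^i * q^(tri (int i - int m) + m) * qbinomial q N i)"
    unfolding S1_def distrib_left sum_distrib_right by (simp add: sum.distrib power_add mult_ac)
  also have "(\<Sum>i\<le>N. z^i * q^(tri (int i - int m) + m) * qbinomial q N i)
      = (\<Sum>i\<le>Suc N. z^i * q^(tri (int i - int m - 1) + i) * qbinomial q N i)"
    by (simp add: tri_step qbinomial_eq_0)
  also have "\<dots> = q^(tri (- int m - 1)) + S2"
    unfolding S2_def by (simp only: sum.atMost_Suc_shift[of _ N] shift_tri) simp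
  finally have lhs: "(\<Sum>i\<le>N. z^i * q^(tri (int i - int m)) * qbinomial q N i) * (z + q^m)
      = S1 + (q^(tri (- int m - 1)) + S2)" .
  have "(\<Sum>i\<le>N. z^(Suc i) * q^(tri (int i - int m)) * qbinomial q (Suc N) (Suc i)) = S2 + S1"
    unfolding S1_def S2_def sum.distrib[symmetric]
  proof (rule sum.cong[OF refl])
    fix i
    show "z^(Suc i) * q^(tri (int i - int m)) * qbinomial q (Suc N) (Suc i)
        = z^(Suc i) * q^(tri (int i - int m) + Suc i) * qbinomial q N (Suc i)
          + z^(Suc i) * q^(tri (int i - int m)) * qbinomial q N i"
      using qbinomial_Suc_dual[of "Suc i" q N] by (simp add: power_add algebra_simps)
  qed
  then have "(\<Sum>i\<le>Suc N. z^i * q^(tri (int i - int m - 1)) * qbinomial q (Suc N) i)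
      = q^(tri (- int m - 1)) + (S2 + S1)"
    by (simp only: sum.atMost_Suc_shift[of _ N] shift_tri) simp
  with lhs show ?thesis
    by (simp add: ac_simps)
qed

theorem jacobi_triple_product_finite:
  "(\<Prod>k\<in>{1..n}. 1 + z * q^k) * (\<Prod>k<m. z + q^k)
     = (\<Sum>i\<le>n + m. z^i * q^(tri (int i - int m)) * qbinomial q (n + m) i)"
proof (induction m)
  case 0
  have "(\<Prod>k\<in>{1..n}. 1 + z * q^k) = (\<Prod>k<n. 1 + (z * q) * q^k)"
    by (induction n) (auto simp: prod.cl_ivl_Suc mult.assoc)
  also have "\<dots> = (\<Sum>i\<le>n. (z * q)^i * q^(i choose 2) * qbinomial q n i)"
    by (rule qbinomial_theorem)
  also have "\<dots> = (\<Sum>i\<le>n. z^i * q^(tri (int i)) * qbinomial q n i)"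
    by (simp add: tri_choose_two power_mult_distrib power_add mult_ac)
  finally show ?case by simp
next
  case (Suc m)
  have "(\<Prod>k\<in>{1..n}. 1 + z * q^k) * (\<Prod>k<Suc m. z + q^k)
      = (\<Sum>i\<le>n + m. z^i * q^(tri (int i - int m)) * qbinomial q (n + m) i) * (z + q^m)"
    unfolding prod.lessThan_Suc Suc.IH[symmetric] by (simp only: mult.assoc)
  also have "\<dots> = (\<Sum>i\<le>Suc (n + m). z^i * q^(tri (int i - int m - 1)) * qbinomial q (Suc (n + m)) i)"
    by (rule theta_sum_mult_step)
  also have "\<dots> = (\<Sum>i\<le>n + Suc m. z^i * q^(tri (int i - int (Suc m))) * qbinomial q (n + Suc m) i)"
    by (simp only: add_Suc_right of_nat_Suc diff_diff_eq add.commute)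
  finally show ?case .
qed

definition qpochhammer :: "'a::comm_ring_1 \<Rightarrow> nat \<Rightarrow> 'a" where
  "qpochhammer q i = (\<Prod>k\<in>{1..i}. 1 - q^k)"

lemma qpochhammer_0 [simp]: "qpochhammer q 0 = 1"
  by (simp add: qpochhammer_def)

lemma qpochhammer_Suc: "qpochhammer q (Suc i) = qpochhammer q i * (1 - q^(Suc i))"
  by (simp add: qpochhammer_def prod.cl_ivl_Suc)

lemma qpochhammer_diff_dvd: "a \<le> b \<Longrightarrow> q^(Suc a) dvd (qpochhammer q b - qpochhammer q a)"
proof (induction b)
  case (Suc b)
  show ?case
  proof (cases "a = Suc b")
    case False
    with Suc.prems have ab: "a \<le> b" by simp
    have eq: "qpochhammer q (Suc b) - qpochhammer q a
        = (qpochhammer q b - qpochhammer q a) - q^(Suc b) * qpochhammer q b"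
      by (simp add: qpochhammer_Suc algebra_simps)
    have "q^(Suc a) dvd q^(Suc b) * qpochhammer q b"
      using ab by (intro dvd_mult2 le_imp_power_dvd) simp
    with Suc.IH[OF ab] show ?thesis
      unfolding eq by (rule dvd_diff)
  qed simp
qed simp

text \<open>The next two lemmas say that \<open>[N,i]\<close> agrees with \<open>1/(q;q)_i\<close> up to order \<open>N - i\<close>
  and with \<open>1/(q;q)_(N-i)\<close> up to order \<open>i\<close>.\<close>

lemma qpochhammer_mult_qbinomial_dvd:
  "i \<le> N \<Longrightarrow> q^(Suc N - i) dvd (qpochhammer q i * qbinomial q N i - 1)"
proof (induction N arbitrary: i)
  case (Suc N)
  show ?case
  proof (cases i)
    case (Suc j)
    have eq: "qpochhammer q i * qbinomial q (Suc N) i - 1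
        = q^i * (qpochhammer q i * qbinomial q N i - 1) + (1 - q^i) * (qpochhammer q j * qbinomial q N j - 1)"
      using qbinomial_Suc_dual[of i q N] Suc by (simp add: qpochhammer_Suc algebra_simps)
    have "q^(Suc (Suc N) - i) dvd q^i * (qpochhammer q i * qbinomial q N i - 1)"
    proof (cases "i \<le> N")
      case True
      have "q^(Suc (Suc N) - i) dvd q^i * q^(Suc N - i)"
        unfolding power_add[symmetric] using True Suc by (intro le_imp_power_dvd) simp
      also have "\<dots> dvd q^i * (qpochhammer q i * qbinomial q N i - 1)"
        using Suc.IH[OF True] by (rule mult_dvd_mono[OF dvd_refl])
      finally show ?thesis .
    next
      case False
      then have "q^(Suc (Suc N) - i) dvd q^i"
        using Suc.prems by (intro le_imp_power_dvd) simp
      then show ?thesis by (rule dvd_mult2)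
    qed
    moreover have "q^(Suc (Suc N) - i) dvd (1 - q^i) * (qpochhammer q j * qbinomial q N j - 1)"
      using Suc.IH[of j] Suc.prems Suc by (intro dvd_mult) simp
    ultimately show ?thesis
      unfolding eq by (rule dvd_add)
  qed simp
qed simp

lemma qpochhammer_mult_qbinomial_dvd':
  "i \<le> N \<Longrightarrow> q^(Suc i) dvd (qpochhammer q (N - i) * qbinomial q N i - 1)"
proof (induction N arbitrary: i)
  case (Suc N)
  show ?case
  proof (cases "i = Suc N")
    case False
    with Suc.prems have iN: "i \<le> N" by simp
    show ?thesis
    proof (cases i)
      case 0
      show ?thesis
        using qpochhammer_diff_dvd[of 0 "Suc N" q] 0 by simp
    next
      case (Suc j)
      define b where "b = N - i"
      have b: "Suc N - i = Suc b" "N - j = Suc b"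
        using iN Suc unfolding b_def by auto
      have eq: "qpochhammer q (Suc N - i) * qbinomial q (Suc N) i - 1
          = (1 - q^(Suc b)) * (qpochhammer q b * qbinomial q N i - 1)
            + q^(Suc b) * (qpochhammer q (Suc b) * qbinomial q N j - 1)"
        using Suc b by (simp add: qpochhammer_Suc algebra_simps)
      have d1: "q^(Suc i) dvd (1 - q^(Suc b)) * (qpochhammer q b * qbinomial q N i - 1)"
        using Suc.IH[OF iN] unfolding b_def by (rule dvd_mult)
      have "q^(Suc i) dvd q^(Suc b) * q^(Suc j)"
        unfolding power_add[symmetric] b_def using iN Suc by (intro le_imp_power_dvd) simp
      also have "\<dots> dvd q^(Suc b) * (qpochhammer q (Suc b) * qbinomial q N j - 1)"
        using Suc.IH[of j] iN Suc b by (intro mult_dvd_mono) simp_all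
      finally show ?thesis
        unfolding eq using d1 by (intro dvd_add)
    qed
  qed simp
qed simp

lemma dvd_mult_minus_one_change_factor:
  fixes d a b g :: "'a::comm_ring_1"
  assumes "d dvd a * g - 1" "d dvd (a - b) * g"
  shows "d dvd b * g - 1"
proof -
  have "b * g - 1 = (a * g - 1) - (a - b) * g"
    by (simp add: algebra_simps)
  then show ?thesis
    using assms by (metis dvd_diff)
qed

lemma qpochhammer_mult_central_qbinomial_dvd:
  assumes "i \<le> 2 * N"
  shows "q^(Suc (min i (2 * N - i))) dvd (qpochhammer q N * qbinomial q (2 * N) i - 1)"
proof (cases "i \<le> N")
  case True
  have "q^(Suc i) dvd q^(Suc N)"
    using True by (intro le_imp_power_dvd) simp
  also have "\<dots> dvd qpochhammer q (2 * N - i) - qpochhammer q N"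
    using True by (intro qpochhammer_diff_dvd) simp
  finally have "q^(Suc i) dvd (qpochhammer q (2 * N - i) - qpochhammer q N) * qbinomial q (2 * N) i"
    by (rule dvd_mult2)
  then have "q^(Suc i) dvd qpochhammer q N * qbinomial q (2 * N) i - 1"
    by (rule dvd_mult_minus_one_change_factor[OF qpochhammer_mult_qbinomial_dvd'[OF assms]])
  then show ?thesis
    using True by simp
next
  case False
  have "q^(Suc (2 * N) - i) dvd q^(Suc N)"
    using False by (intro le_imp_power_dvd) simp
  also have "\<dots> dvd qpochhammer q i - qpochhammer q N"
    using False by (intro qpochhammer_diff_dvd) simp
  finally have "q^(Suc (2 * N) - i) dvd (qpochhammer q i - qpochhammer q N) * qbinomial q (2 * N) i"
    by (rule dvd_mult2)
  then have "q^(Suc (2 * N) - i) dvd qpochhammer q N * qbinomial q (2 * N) i - 1"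
    by (rule dvd_mult_minus_one_change_factor[OF qpochhammer_mult_qbinomial_dvd[OF assms]])
  moreover have "Suc (min i (2 * N - i)) = Suc (2 * N) - i"
    using False assms by simp
  ultimately show ?thesis
    by (simp only:)
qed

section \<open>Power series over \<open>\<int>/2\<close> and congruences modulo \<open>X^K\<close>\<close>

type_synonym fps2 = "bit fps"

lemma fps2_two [simp]: "(2 :: fps2) = 0"
  by (simp add: fps_eq_iff fps_numeral_nth)

lemma fps2_add_self [simp]: "(f :: fps2) + f = 0"
  by (metis mult_2 fps2_two mult_zero_left)

lemma fps2_diff: "(f :: fps2) - g = f + g"
  by (simp add: fps_eq_iff)

lemma fps2_square_add: "((f :: fps2) + g)^2 = f^2 + g^2"
proof -
  have "(f + g)^2 = f^2 + g^2 + (f * g + f * g)"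
    by (simp add: power2_eq_square algebra_simps del: fps2_add_self)
  then show ?thesis by simp
qed

lemma fps2_square_sum: "finite S \<Longrightarrow> (\<Sum>i\<in>S. f i :: fps2)^2 = (\<Sum>i\<in>S. (f i)^2)"
  by (induction S rule: finite_induct) (simp_all add: fps2_square_add)

definition cong_X :: "nat \<Rightarrow> 'a::comm_ring_1 fps \<Rightarrow> 'a fps \<Rightarrow> bool" where
  "cong_X K f g \<longleftrightarrow> fps_X^K dvd f - g"

lemma cong_X_refl [simp]: "cong_X K f f"
  by (simp add: cong_X_def)

lemma cong_X_sym: "cong_X K f g \<Longrightarrow> cong_X K g f"
  unfolding cong_X_def by (subst dvd_minus_iff[symmetric]) simp

lemma cong_X_trans [trans]: "cong_X K f g \<Longrightarrow> cong_X K g h \<Longrightarrow> cong_X K f h"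
  unfolding cong_X_def using dvd_add[of _ "f - g" "g - h"] by simp

lemma cong_X_add: "cong_X K f g \<Longrightarrow> cong_X K f' g' \<Longrightarrow> cong_X K (f + f') (g + g')"
  unfolding cong_X_def using dvd_add[of _ "f - g" "f' - g'"] by (simp add: algebra_simps)

lemma cong_X_mult: "cong_X K f g \<Longrightarrow> cong_X K f' g' \<Longrightarrow> cong_X K (f * f') (g * g')"
proof -
  assume "cong_X K f g" "cong_X K f' g'"
  then have "fps_X^K dvd (f - g) * f' + g * (f' - g')"
    unfolding cong_X_def by (intro dvd_add dvd_mult dvd_mult2)
  moreover have "(f - g) * f' + g * (f' - g') = f * f' - g * g'"
    by (simp add: algebra_simps)
  ultimately show ?thesis
    unfolding cong_X_def by simp
qed

lemma cong_X_mono: "cong_X K f g \<Longrightarrow> K' \<le> K \<Longrightarrow> cong_X K' f g"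
  unfolding cong_X_def by (meson dvd_trans le_imp_power_dvd)

lemma cong_X_nth: "cong_X K f g \<Longrightarrow> i < K \<Longrightarrow> f $ i = g $ i"
proof -
  assume "cong_X K f g" "i < K"
  then obtain h where "f - g = fps_X^K * h"
    unfolding cong_X_def by (auto elim: dvdE)
  then have "(f - g) $ i = 0"
    using \<open>i < K\<close> by (simp add: fps_X_power_mult_nth)
  then show ?thesis
    by simp
qed

lemma cong_X_sum:
  "(\<And>i. i \<in> S \<Longrightarrow> cong_X K (f i) (g i)) \<Longrightarrow> cong_X K (\<Sum>i\<in>S. f i) (\<Sum>i\<in>S. g i)"
  by (induction S rule: infinite_finite_induct) (auto intro: cong_X_add)

lemma cong_X_prod:
  "(\<And>i. i \<in> S \<Longrightarrow> cong_X K (f i) (g i)) \<Longrightarrow> cong_X K (\<Prod>i\<in>S. f i) (\<Prod>i\<in>S. g i)"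
  by (induction S rule: infinite_finite_induct) (auto intro: cong_X_mult)

lemma cong_X_mult_X_power: "cong_X K f g \<Longrightarrow> cong_X (M + K) (fps_X^M * f) (fps_X^M * g)"
  unfolding cong_X_def by (simp add: power_add right_diff_distrib[symmetric] mult_dvd_mono)

lemma cong_X_square: "cong_X K (f :: fps2) g \<Longrightarrow> cong_X (2 * K) (f^2) (g^2)"
proof -
  assume "cong_X K f g"
  then obtain h where h: "f - g = fps_X^K * h"
    unfolding cong_X_def by (auto elim: dvdE)
  have "f^2 - g^2 = (f - g)^2"
    by (simp add: fps2_diff fps2_square_add)
  also have "\<dots> = fps_X^(2 * K) * h^2"
    unfolding h by (simp add: power_mult_distrib power_mult mult.commute)
  finally show ?thesis
    unfolding cong_X_def by simp
qed

definition prodX :: "nat set \<Rightarrow> 'a::comm_ring_1 fps" where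
  "prodX S = (\<Prod>k\<in>S. 1 + fps_X^k)"

lemma prodX_union:
  "finite A \<Longrightarrow> finite B \<Longrightarrow> A \<inter> B = {} \<Longrightarrow> prodX (A \<union> B) = prodX A * prodX B"
  unfolding prodX_def by (rule prod.union_disjoint)

lemma prodX_image: "inj_on f A \<Longrightarrow> prodX (f ` A) = (\<Prod>k\<in>A. 1 + fps_X^(f k))"
  unfolding prodX_def by (simp add: prod.reindex)

lemma prodX_nth_0 [simp]: "0 \<notin> A \<Longrightarrow> prodX A $ 0 = 1"
  unfolding prodX_def
  by (induction A rule: infinite_finite_induct) (auto simp: fps_mult_nth)

lemma cong_X_prodX_1: "\<forall>k\<in>A. K \<le> k \<Longrightarrow> cong_X K (prodX A) 1"
  unfolding prodX_def
  by (rule cong_X_prod[where g="\<lambda>_. 1", simplified])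
    (simp add: cong_X_def le_imp_power_dvd)

lemma cong_X_prodX:
  assumes "finite A" "finite B" "A \<inter> {..<K} = B \<inter> {..<K}"
  shows "cong_X K (prodX A :: 'a::comm_ring_1 fps) (prodX B)"
proof -
  have split: "(prodX C :: 'a fps) = prodX (C \<inter> {..<K}) * prodX (C - {..<K})" if "finite C" for C :: "nat set"
    using that by (subst prodX_union[symmetric]) (auto intro: arg_cong[where f=prodX])
  have "cong_X K (prodX C :: 'a fps) (prodX (C \<inter> {..<K}))" if "finite C" for C :: "nat set"
  proof -
    have "cong_X K (prodX (C \<inter> {..<K}) * prodX (C - {..<K}) :: 'a fps) (prodX (C \<inter> {..<K}) * 1)"
      by (intro cong_X_mult cong_X_refl cong_X_prodX_1) auto
    then show ?thesis
      using split[OF that] by simp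
  qed
  from this[OF assms(1)] this[OF assms(2)] show ?thesis
    unfolding assms(3) by (blast intro: cong_X_trans cong_X_sym)
qed

section \<open>The Jacobi triple product modulo \<open>X^K\<close>\<close>

lemma le_tri_add_min:
  assumes "i \<le> 2 * N"
  shows "N \<le> tri (int i - int N) + min i (2 * N - i) + 1"
proof -
  have "int (min i (2 * N - i)) = int N - \<bar>int i - int N\<bar>"
    using assms by auto
  then show ?thesis
    using tri_ge_abs[of "int i - int N"] by linarith
qed

text \<open>With \<open>q = X^c\<close> and \<open>z = X\<close>, the finite triple product of length \<open>N\<close> agrees with the
  theta series up to order \<open>c N\<close>: the Gaussian polynomial \<open>[2N, i]\<close> is close to \<open>1/(q;q)_N\<close>.\<close>

theorem jacobi_triple_product_cong_X:
  assumes "K \<le> c * N"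
  shows "cong_X K
     ((\<Prod>k\<in>{1..N}. 1 + fps_X * (fps_X^c)^k) * (\<Prod>k<N. fps_X + (fps_X^c)^k)
        * qpochhammer (fps_X^c :: 'a::comm_ring_1 fps) N)
     (\<Sum>i\<le>2 * N. fps_X^(i + c * tri (int i - int N)))"
proof -
  let ?q = "fps_X^c :: 'a fps"
  let ?E = "\<lambda>i. i + c * tri (int i - int N)"
  have "(\<Prod>k\<in>{1..N}. 1 + fps_X * ?q^k) * (\<Prod>k<N. fps_X + ?q^k) * qpochhammer ?q N
      = (\<Sum>i\<le>2 * N. fps_X^i * ?q^(tri (int i - int N)) * qbinomial ?q (2 * N) i) * qpochhammer ?q N"
    using jacobi_triple_product_finite[where n=N and m=N and z=fps_X and q="?q"] by (simp add: mult_2)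
  also have "\<dots> = (\<Sum>i\<le>2 * N. fps_X^(?E i) * (qpochhammer ?q N * qbinomial ?q (2 * N) i))"
    unfolding sum_distrib_right by (rule sum.cong) (simp_all add: power_add power_mult mult_ac)
  finally have lhs: "(\<Prod>k\<in>{1..N}. 1 + fps_X * ?q^k) * (\<Prod>k<N. fps_X + ?q^k) * qpochhammer ?q N
      = (\<Sum>i\<le>2 * N. fps_X^(?E i) * (qpochhammer ?q N * qbinomial ?q (2 * N) i))" .
  have "cong_X K (fps_X^(?E i) * (qpochhammer ?q N * qbinomial ?q (2 * N) i)) (fps_X^(?E i))"
    if i: "i \<le> 2 * N" for i
  proof -
    let ?m = "Suc (min i (2 * N - i))"
    have "c * N \<le> c * (tri (int i - int N) + ?m)"
      using le_tri_add_min[OF i] by (intro mult_left_mono) simp_all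
    then have "K \<le> ?E i + c * ?m"
      using assms by (simp add: algebra_simps)
    then have "(fps_X :: 'a fps)^K dvd fps_X^(?E i) * ?q^?m"
      by (simp add: le_imp_power_dvd flip: power_mult power_add)
    also have "\<dots> dvd fps_X^(?E i) * (qpochhammer ?q N * qbinomial ?q (2 * N) i - 1)"
      using qpochhammer_mult_central_qbinomial_dvd[OF i] by (rule mult_dvd_mono[OF dvd_refl])
    finally show ?thesis
      unfolding cong_X_def by (simp add: algebra_simps)
  qed
  then show ?thesis
    unfolding lhs by (intro cong_X_sum) simp
qed

lemma qpochhammer_X_power_fps2:
  "0 < c \<Longrightarrow> qpochhammer (fps_X^c :: fps2) j = prodX ((\<lambda>k. c * k) ` {1..j})"
  unfolding qpochhammer_def by (subst prodX_image) (auto simp: inj_on_def fps2_diff power_mult)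

lemma prod_1_plus_X_mult_X_power:
  assumes "0 < c"
  shows "(\<Prod>k\<in>{1..N}. 1 + fps_X * (fps_X^c)^k) = (prodX ((\<lambda>k. c * k + 1) ` {1..N}) :: 'a::comm_ring_1 fps)"
proof -
  have "inj_on (\<lambda>k. c * k + 1) {1..N}"
    using assms by (auto simp: inj_on_def)
  then show ?thesis
    by (simp add: prodX_image power_add mult.commute flip: power_mult)
qed

lemma prod_X_plus_X_power:
  assumes "3 \<le> c"
  shows "(\<Prod>k<Suc M. fps_X + (fps_X^c)^k)
    = (fps_X^M * prodX (insert 1 ((\<lambda>k. c * k + (c - 1)) ` {..<M})) :: 'a::comm_ring_1 fps)"
proof -
  let ?B = "(\<lambda>k. c * k + (c - 1)) ` {..<M}"
  have step: "fps_X + (fps_X^c :: 'a fps)^(Suc k) = fps_X * (1 + fps_X^(c * k + (c - 1)))" for k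
  proof -
    have "c * Suc k = Suc (c * k + (c - 1))"
      using assms by (simp add: algebra_simps)
    then have "(fps_X^c :: 'a fps)^(Suc k) = fps_X * fps_X^(c * k + (c - 1))"
      by (metis power_Suc power_mult)
    then show ?thesis
      by (simp add: algebra_simps)
  qed
  have inj: "inj_on (\<lambda>k. c * k + (c - 1)) {..<M}"
  proof (rule inj_onI)
    fix x y assume "c * x + (c - 1) = c * y + (c - 1)"
    then have "c * x = c * y"
      by (simp only: add_right_cancel)
    then show "x = y"
      using assms by simp
  qed
  have "1 \<notin> ?B"
    using assms by auto
  have "(\<Prod>k<Suc M. fps_X + (fps_X^c :: 'a fps)^k)
      = (fps_X + 1) * (\<Prod>k<M. fps_X * (1 + fps_X^(c * k + (c - 1))))"
    unfolding prod.lessThan_Suc_shift step by simp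
  also have "\<dots> = (1 + fps_X) * (fps_X^M * prodX ?B)"
    unfolding prodX_image[OF inj] by (simp add: prod.distrib add.commute)
  also have "\<dots> = fps_X^M * prodX (insert 1 ?B)"
    using \<open>1 \<notin> ?B\<close> by (simp add: prodX_def mult_ac)
  finally show ?thesis .
qed

definition theta_exponents :: "nat \<Rightarrow> nat \<Rightarrow> nat set" where
  "theta_exponents c M = insert 1 ((\<lambda>k. c * k + (c - 1)) ` {..<M})
     \<union> (\<lambda>k. c * k + 1) ` {1..Suc M} \<union> (\<lambda>k. c * k) ` {1..Suc M}"

lemma theta_exponents_mod:
  assumes c: "3 \<le> c" and x: "x \<in> theta_exponents c M"
  shows "1 \<le> x \<and> (x mod c = 0 \<or> x mod c = 1 \<or> x mod c = c - 1)"
proof -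
  have mod_c: "(c * k + r) mod c = r" if "r < c" for k r
    using that by simp
  from x consider "x = 1" | k where "x = c * k + (c - 1)" | k where "x = c * k + 1" "1 \<le> k"
    | k where "x = c * k" "1 \<le> k"
    unfolding theta_exponents_def by fastforce
  then show ?thesis
  proof cases
    case (2 k)
    then show ?thesis
      using c mod_c[of "c - 1" k] by simp
  next
    case (3 k)
    then show ?thesis
      using c mod_c[of 1 k] by simp
  qed (use c in auto)
qed

text \<open>Modulo 2 the signs disappear and the triple product becomes a product of binomials
  \<open>1 + X^e\<close>, one for each \<open>e \<equiv> 0, \<plusminus>1 (mod c)\<close>.\<close>

lemma theta_product_fps2:
  assumes c: "3 \<le> c"
  shows "(\<Prod>k\<in>{1..Suc M}. 1 + fps_X * (fps_X^c)^k) * (\<Prod>k<Suc M. fps_X + (fps_X^c)^k)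
      * qpochhammer (fps_X^c :: fps2) (Suc M) = fps_X^M * prodX (theta_exponents c M)"
proof -
  define A where "A = (\<lambda>k. c * k + 1) ` {1..Suc M}"
  define B where "B = insert 1 ((\<lambda>k. c * k + (c - 1)) ` {..<M})"
  define C where "C = (\<lambda>k. c * k) ` {1..Suc M}"
  have mod_c: "(c * k + r) mod c = r" if "r < c" for k r
    using that by simp
  have resA: "x mod c = 1 \<and> x \<noteq> 1" if "x \<in> A" for x
    using that c mod_c[of 1] by (auto simp: A_def)
  have resB: "x = 1 \<or> x mod c = c - 1" if "x \<in> B" for x
    using that c mod_c[of "c - 1"] by (auto simp: B_def)
  have resC: "x mod c = 0 \<and> x \<noteq> 1" if "x \<in> C" for x
    using that c by (auto simp: C_def)
  have "B \<inter> A = {}"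
    using resA resB c by (intro equals0I) force
  moreover have "(B \<union> A) \<inter> C = {}"
    using resA resB resC c by (intro equals0I) force
  moreover have fin: "finite A" "finite B" "finite C"
    by (simp_all add: A_def B_def C_def)
  ultimately have "prodX (theta_exponents c M) = prodX B * prodX A * (prodX C :: fps2)"
    unfolding theta_exponents_def A_def[symmetric] B_def[symmetric] C_def[symmetric]
    by (simp only: prodX_union[OF fin(2,1)] prodX_union[OF finite_UnI[OF fin(2,1)] fin(3)])
  moreover have "(\<Prod>k\<in>{1..Suc M}. 1 + fps_X * (fps_X^c)^k) = (prodX A :: fps2)"
    unfolding A_def using c by (intro prod_1_plus_X_mult_X_power) simp
  moreover have "(\<Prod>k<Suc M. fps_X + (fps_X^c)^k) = (fps_X^M * prodX B :: fps2)"
    unfolding B_def using c by (rule prod_X_plus_X_power)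
  moreover have "qpochhammer (fps_X^c :: fps2) (Suc M) = prodX C"
    unfolding C_def using c by (intro qpochhammer_X_power_fps2) simp
  ultimately show ?thesis
    by (simp only: mult_ac)
qed

lemma mem_theta_exponents:
  assumes c: "3 \<le> c" and x: "x \<le> M"
  shows "x \<in> theta_exponents c M \<longleftrightarrow> 1 \<le> x \<and> (x mod c = 0 \<or> x mod c = 1 \<or> x mod c = c - 1)"
proof
  assume r: "1 \<le> x \<and> (x mod c = 0 \<or> x mod c = 1 \<or> x mod c = c - 1)"
  define k where "k = x div c"
  have x_eq: "x = c * k + x mod c" and "k \<le> x"
    unfolding k_def by simp_all
  from r consider "x mod c = 0" | "x mod c = 1" | "x mod c = c - 1"
    by auto
  then show "x \<in> theta_exponents c M"
  proof cases
    case 1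
    then have "x = c * k"
      using x_eq by simp
    moreover have "k \<in> {1..Suc M}"
      using r \<open>x = c * k\<close> \<open>k \<le> x\<close> x by (cases k) auto
    ultimately show ?thesis
      unfolding theta_exponents_def by blast
  next
    case 2
    then have "x = 1 \<or> (k \<in> {1..Suc M} \<and> x = c * k + 1)"
      using x_eq \<open>k \<le> x\<close> x by (cases "k = 0") auto
    then show ?thesis
      unfolding theta_exponents_def by blast
  next
    case 3
    moreover have "k \<le> c * k"
      using c by simp
    ultimately have "k < M" "x = c * k + (c - 1)"
      using x_eq x c by linarith+
    then show ?thesis
      unfolding theta_exponents_def by blast
  qed
qed (use theta_exponents_mod[OF c] in auto)

lemma theta_series_cong_X:
  assumes "3 \<le> c"
  shows "cong_X (n + Suc n) (fps_X^n * prodX (theta_exponents c n))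
     (\<Sum>i\<le>2 * Suc n. fps_X^(i + c * tri (int i - int (Suc n))) :: fps2)"
proof -
  have "n + Suc n \<le> c * Suc n"
    using mult_le_mono1[OF assms, of "Suc n"] by simp
  from jacobi_triple_product_cong_X[OF this, where 'a=bit] show ?thesis
    unfolding theta_product_fps2[OF assms] .
qed

section \<open>The Euler product modulo 2 and its square and cube\<close>

text \<open>Modulo 2, \<open>1 + X^k = 1 - X^k\<close>, so this is the truncated Euler function \<open>(q;q)\<^sub>n\<close>.\<close>

definition euler_product :: "nat \<Rightarrow> fps2" where
  "euler_product n = prodX {1..n}"

definition odds_upto :: "nat \<Rightarrow> nat set" where
  "odds_upto n = {k \<in> {1..n}. odd k}"

definition multiples_upto :: "nat \<Rightarrow> nat \<Rightarrow> nat set" where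
  "multiples_upto d n = {k \<in> {1..n}. d dvd k}"

lemma multiples_upto_eq_image: "0 < d \<Longrightarrow> multiples_upto d n = (\<lambda>k. d * k) ` {1..n div d}"
  unfolding multiples_upto_def
  by (auto elim!: dvdE intro!: image_eqI simp: less_eq_div_iff_mult_less_eq mult.commute)

lemma prodX_double_image: "prodX ((\<lambda>k. 2 * k) ` A) = (prodX A :: fps2)^2"
proof -
  have "prodX ((\<lambda>k. 2 * k) ` A) = (\<Prod>k\<in>A. (1 + fps_X^k :: fps2)^2)"
    by (subst prodX_image) (auto simp: inj_on_def fps2_square_add power_mult mult.commute)
  then show ?thesis
    by (simp add: prodX_def prod_power_distrib)
qed

lemma cong_X_euler_product: "m \<le> n \<Longrightarrow> cong_X (Suc m) (euler_product m) (euler_product n)"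
  unfolding euler_product_def by (rule cong_X_prodX) auto

lemma euler_product_split:
  "euler_product n = prodX (odds_upto n) * prodX (multiples_upto 2 n)"
  unfolding euler_product_def odds_upto_def multiples_upto_def
  by (subst prodX_union[symmetric]) (auto intro: arg_cong[where f=prodX])

lemma cong_X_prodX_evens:
  "cong_X (Suc n) (prodX (multiples_upto 2 n)) (euler_product n ^ 2)"
proof -
  have "cong_X (2 * Suc (n div 2)) (euler_product (n div 2) ^ 2) (euler_product n ^ 2)"
    by (intro cong_X_square cong_X_euler_product) simp
  then have "cong_X (Suc n) (euler_product (n div 2) ^ 2) (euler_product n ^ 2)"
    by (rule cong_X_mono) simp
  then show ?thesis
    by (simp add: multiples_upto_eq_image prodX_double_image euler_product_def)
qed

lemma cong_X_prodX_multiples_4: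
  "cong_X (Suc n) (prodX (multiples_upto 4 n)) (euler_product n ^ 4)"
proof -
  have "cong_X (2 * (2 * Suc (n div 4))) ((euler_product (n div 4) ^ 2) ^ 2) ((euler_product n ^ 2) ^ 2)"
    by (intro cong_X_square cong_X_euler_product) simp
  then have "cong_X (Suc n) ((euler_product (n div 4) ^ 2) ^ 2) ((euler_product n ^ 2) ^ 2)"
    by (rule cong_X_mono) simp
  moreover have "(\<lambda>k. 4 * k) ` A = (\<lambda>k. 2 * k) ` (\<lambda>k. 2 * k) ` A" for A :: "nat set"
    by (simp add: image_image)
  ultimately show ?thesis
    by (simp add: multiples_upto_eq_image prodX_double_image euler_product_def flip: power_mult)
qed

lemma cong_X_odds_mult_euler_product_square:
  "cong_X (Suc n) (prodX (odds_upto n) * euler_product n ^ 2) (euler_product n)"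
proof -
  have "cong_X (Suc n) (prodX (odds_upto n) * euler_product n ^ 2)
      (prodX (odds_upto n) * prodX (multiples_upto 2 n))"
    by (intro cong_X_mult cong_X_refl cong_X_sym[OF cong_X_prodX_evens])
  then show ?thesis
    by (simp only: euler_product_split[symmetric])
qed

lemma cong_X_euler_product_cube:
  "cong_X (Suc n) (prodX (odds_upto n) * prodX (multiples_upto 4 n)) (euler_product n ^ 3)"
proof -
  have "cong_X (Suc n) (prodX (odds_upto n) * prodX (multiples_upto 4 n))
      ((prodX (odds_upto n) * euler_product n ^ 2) * euler_product n ^ 2)"
    using cong_X_mult[OF cong_X_refl cong_X_prodX_multiples_4]
    by (simp add: mult.assoc flip: power_add)
  also have "cong_X (Suc n) \<dots> (euler_product n * euler_product n ^ 2)"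
    by (intro cong_X_mult cong_X_odds_mult_euler_product_square cong_X_refl)
  finally show ?thesis
    by (simp add: power3_eq_cube power2_eq_square mult.assoc)
qed

lemma finite_theta_exponents [simp]: "finite (theta_exponents c n)"
  by (simp add: theta_exponents_def)

lemma theta_exponents_3: "x \<le> n \<Longrightarrow> x \<in> theta_exponents 3 n \<longleftrightarrow> x \<in> {1..n}"
proof -
  assume "x \<le> n"
  moreover have "x mod 3 = 0 \<or> x mod 3 = 1 \<or> x mod 3 = 2"
    by presburger
  ultimately show ?thesis
    by (auto simp: mem_theta_exponents)
qed

lemma theta_exponents_4:
  "x \<le> n \<Longrightarrow> x \<in> theta_exponents 4 n \<longleftrightarrow> x \<in> odds_upto n \<union> multiples_upto 4 n"
proof -
  assume "x \<le> n"
  moreover have "x mod 4 = 0 \<or> x mod 4 = 1 \<or> x mod 4 = 3 \<longleftrightarrow> odd x \<or> 4 dvd x"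
    by presburger
  ultimately show ?thesis
    by (auto simp: mem_theta_exponents odds_upto_def multiples_upto_def)
qed

lemma sum_fps_X_power_nth:
  "(\<Sum>i\<in>S. fps_X^(e i) :: 'a::comm_ring_1 fps) $ t = (\<Sum>i\<in>S. if e i = t then 1 else 0)"
  by (simp add: fps_sum_nth eq_commute)

lemma euler_product_square_nth:
  "(euler_product n ^ 2) $ n
     = (\<Sum>i\<le>2 * Suc n. if 2 * (i + 3 * tri (int i - int (Suc n))) = 3 * n then 1 else 0)"
proof -
  let ?Y = "prodX (theta_exponents 3 n) :: fps2"
  let ?S = "\<Sum>i\<le>2 * Suc n. fps_X^(i + 3 * tri (int i - int (Suc n))) :: fps2"
  have "cong_X (Suc n) ?Y (euler_product n)"
    unfolding euler_product_def
    by (rule cong_X_prodX) (auto simp: theta_exponents_3)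
  then have "cong_X (2 * Suc n) (?Y^2) (euler_product n ^ 2)"
    by (rule cong_X_square)
  then have "(euler_product n ^ 2) $ n = (?Y^2) $ n"
    by (simp add: cong_X_nth)
  also have "\<dots> = ((fps_X^n * ?Y)^2) $ (3 * n)"
    by (simp add: power_mult_distrib fps_X_power_mult_nth flip: power_mult)
  also have "\<dots> = (?S^2) $ (3 * n)"
    by (rule cong_X_nth[OF cong_X_square[OF theta_series_cong_X]]) simp_all
  also have "?S^2 = (\<Sum>i\<le>2 * Suc n. fps_X^(2 * (i + 3 * tri (int i - int (Suc n)))))"
    unfolding fps2_square_sum[OF finite_atMost]
    by (rule sum.cong) (simp_all add: mult.commute flip: power_mult)
  finally show ?thesis
    unfolding sum_fps_X_power_nth .
qed

lemma euler_product_cube_nth: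
  "(euler_product n ^ 3) $ n
     = (\<Sum>i\<le>2 * Suc n. if i + 4 * tri (int i - int (Suc n)) = 2 * n then 1 else 0)"
proof -
  let ?Y = "prodX (theta_exponents 4 n) :: fps2"
  have "cong_X (Suc n) ?Y (prodX (odds_upto n \<union> multiples_upto 4 n))"
    by (rule cong_X_prodX) (auto simp: odds_upto_def multiples_upto_def theta_exponents_4)
  also have "prodX (odds_upto n \<union> multiples_upto 4 n) = prodX (odds_upto n) * prodX (multiples_upto 4 n)"
    by (rule prodX_union) (auto simp: odds_upto_def multiples_upto_def elim!: dvdE)
  also note cong_X_euler_product_cube
  finally have "(euler_product n ^ 3) $ n = ?Y $ n"
    by (simp add: cong_X_nth)
  also have "\<dots> = (fps_X^n * ?Y) $ (2 * n)"
    by (simp add: fps_X_power_mult_nth mult_2)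
  also have "\<dots> = (\<Sum>i\<le>2 * Suc n. fps_X^(i + 4 * tri (int i - int (Suc n))) :: fps2) $ (2 * n)"
    by (rule cong_X_nth[OF theta_series_cong_X]) simp_all
  finally show ?thesis
    unfolding sum_fps_X_power_nth .
qed

lemma quadratic_mod_eq:
  fixes a b c j m :: int
  shows "(a * j * j + b * j + c) mod m = (a * (j mod m) * (j mod m) + b * (j mod m) + c) mod m"
proof -
  define q r where "q = j div m" and "r = j mod m"
  have j: "j = m * q + r"
    unfolding q_def r_def by simp
  have "a * j * j + b * j + c = (a * r * r + b * r + c) + (a * m * q * q + 2 * a * q * r + b * q) * m"
    unfolding j by (simp add: algebra_simps)
  then have "(a * j * j + b * j + c) mod m = (a * r * r + b * r + c) mod m"
    by (simp only: mod_mult_self1)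
  then show ?thesis
    unfolding r_def .
qed

lemma quadratics_mod_11:
  fixes j :: int
  shows "(3 * j * j + 5 * j + 2) mod 11 \<notin> {5, 7, 9}"
    and "(2 * j * j + 3 * j + 1) mod 11 \<notin> {5, 7, 9}"
proof -
  define r where "r = j mod 11"
  have "r = 0 \<or> r = 1 \<or> r = 2 \<or> r = 3 \<or> r = 4 \<or> r = 5 \<or> r = 6 \<or> r = 7 \<or> r = 8 \<or> r = 9 \<or> r = 10"
    unfolding r_def by arith
  then have "(3 * r * r + 5 * r + 2) mod 11 \<notin> {5, 7, 9}" "(2 * r * r + 3 * r + 1) mod 11 \<notin> {5, 7, 9}"
    by (elim disjE; simp)+
  moreover have "(3 * j * j + 5 * j + 2) mod 11 = (3 * r * r + 5 * r + 2) mod 11"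
    and "(2 * j * j + 3 * j + 1) mod 11 = (2 * r * r + 3 * r + 1) mod 11"
    unfolding r_def by (rule quadratic_mod_eq)+
  ultimately show "(3 * j * j + 5 * j + 2) mod 11 \<notin> {5, 7, 9}" "(2 * j * j + 3 * j + 1) mod 11 \<notin> {5, 7, 9}"
    by simp_all
qed

lemma euler_product_square_nth_eq_0:
  assumes "n mod 11 \<in> {5, 7, 9}"
  shows "(euler_product n ^ 2) $ n = 0"
proof -
  have "2 * (i + 3 * tri (int i - int (Suc n))) \<noteq> 3 * n" for i
  proof
    define d where "d = int i - int (Suc n)"
    assume "2 * (i + 3 * tri (int i - int (Suc n))) = 3 * n"
    then have "int (2 * (i + 3 * tri d)) = int (3 * n)"
      unfolding d_def by (rule arg_cong)
    then have "2 * (int i + 3 * int (tri d)) = 3 * int n"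
      by simp
    then have "int n = 3 * d * d + 5 * d + 2"
      using double_tri[of d] unfolding d_def by (simp add: algebra_simps)
    then have "int (n mod 11) = (3 * d * d + 5 * d + 2) mod 11"
      by (simp add: of_nat_mod)
    then show False
      using assms quadratics_mod_11(1)[of d] by auto
  qed
  then show ?thesis
    by (simp add: euler_product_square_nth)
qed

lemma euler_product_cube_nth_eq_0:
  assumes "n mod 11 \<in> {5, 7, 9}"
  shows "(euler_product n ^ 3) $ n = 0"
proof -
  have "i + 4 * tri (int i - int (Suc n)) \<noteq> 2 * n" for i
  proof
    define d where "d = int i - int (Suc n)"
    assume "i + 4 * tri (int i - int (Suc n)) = 2 * n"
    then have "int (i + 4 * tri d) = int (2 * n)"
      unfolding d_def by (rule arg_cong)
    then have "int i + 4 * int (tri d) = 2 * int n"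
      by simp
    then have "int n = 2 * d * d + 3 * d + 1"
      using double_tri[of d] unfolding d_def by (simp add: algebra_simps)
    then have "int (n mod 11) = (2 * d * d + 3 * d + 1) mod 11"
      by (simp add: of_nat_mod)
    then show False
      using assms quadratics_mod_11(2)[of d] by auto
  qed
  then show ?thesis
    by (simp add: euler_product_cube_nth)
qed

section \<open>Counting multisets with prescribed multiplicities\<close>

definition msets_with_mults :: "nat set \<Rightarrow> (nat \<Rightarrow> nat \<Rightarrow> bool) \<Rightarrow> nat \<Rightarrow> nat multiset set" where
  "msets_with_mults K A s =
     {lam. set_mset lam \<subseteq> K \<and> (\<forall>k\<in>K. A k (count lam k)) \<and> sum_mset lam = s}"

definition mults_gf :: "(nat \<Rightarrow> nat \<Rightarrow> bool) \<Rightarrow> nat \<Rightarrow> 'a::comm_semiring_1 fps" where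
  "mults_gf A k = Abs_fps (\<lambda>i. if k dvd i \<and> A k (i div k) then 1 else 0)"

lemma msets_with_mults_empty: "msets_with_mults {} A s = (if s = 0 then {{#}} else {})"
  unfolding msets_with_mults_def by auto

lemma msets_with_mults_insert:
  assumes k: "k \<notin> K" "0 < k"
  shows "msets_with_mults (insert k K) A s =
    (\<Union>i\<in>{i. i \<le> s \<and> k dvd i \<and> A k (i div k)}.
       (\<lambda>mu. mu + replicate_mset (i div k) k) ` msets_with_mults K A (s - i))"
proof (intro equalityI subsetI)
  fix lam assume lam: "lam \<in> msets_with_mults (insert k K) A s"
  define c where "c = count lam k"
  define mu where "mu = filter_mset (\<lambda>x. x \<noteq> k) lam"
  have dec: "lam = mu + replicate_mset c k"
    unfolding mu_def c_def by (rule multiset_eqI) auto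
  have "sum_mset lam = sum_mset mu + c * k"
    using dec by simp
  then have "c * k \<le> s" "mu \<in> msets_with_mults K A (s - c * k)"
    using lam k unfolding msets_with_mults_def mu_def by auto
  moreover have "A k c"
    using lam unfolding msets_with_mults_def c_def by auto
  ultimately show "lam \<in> (\<Union>i\<in>{i. i \<le> s \<and> k dvd i \<and> A k (i div k)}.
       (\<lambda>mu. mu + replicate_mset (i div k) k) ` msets_with_mults K A (s - i))"
    using dec k by (intro UN_I[of "c * k"]) auto
next
  fix lam assume "lam \<in> (\<Union>i\<in>{i. i \<le> s \<and> k dvd i \<and> A k (i div k)}.
       (\<lambda>mu. mu + replicate_mset (i div k) k) ` msets_with_mults K A (s - i))"
  then obtain i mu where i: "i \<le> s" "k dvd i" "A k (i div k)"
    and mu: "mu \<in> msets_with_mults K A (s - i)" and lam: "lam = mu + replicate_mset (i div k) k"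
    by auto
  have "count mu k = 0"
    using mu k unfolding msets_with_mults_def by (auto simp: count_eq_zero_iff)
  moreover have "count lam k' = count mu k'" if "k' \<noteq> k" for k'
    using lam that by simp
  ultimately show "lam \<in> msets_with_mults (insert k K) A s"
    using mu lam i k unfolding msets_with_mults_def by auto
qed

lemma card_msets_with_mults_insert:
  assumes k: "k \<notin> K" "0 < k" and fin: "\<And>t. finite (msets_with_mults K A t)"
  shows "finite (msets_with_mults (insert k K) A s)"
    and "card (msets_with_mults (insert k K) A s)
      = (\<Sum>i | i \<le> s \<and> k dvd i \<and> A k (i div k). card (msets_with_mults K A (s - i)))"
proof -
  let ?I = "{i. i \<le> s \<and> k dvd i \<and> A k (i div k)}"
  let ?add = "\<lambda>i mu. mu + replicate_mset (i div k) k"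
  have count_k: "count (?add i mu) k = i div k" if "mu \<in> msets_with_mults K A t" for i mu t
    using that k unfolding msets_with_mults_def by (auto simp: count_eq_zero_iff)
  have "?add i ` msets_with_mults K A (s - i) \<inter> ?add j ` msets_with_mults K A (s - j) = {}"
    if "i \<in> ?I" "j \<in> ?I" "i \<noteq> j" for i j
  proof -
    have "i div k \<noteq> j div k"
      using that by (auto elim!: dvdE simp: k)
    show ?thesis
    proof (rule equals0I)
      fix x assume "x \<in> ?add i ` msets_with_mults K A (s - i) \<inter> ?add j ` msets_with_mults K A (s - j)"
      then obtain mu1 mu2 where "mu1 \<in> msets_with_mults K A (s - i)" "x = ?add i mu1"
        and "mu2 \<in> msets_with_mults K A (s - j)" "x = ?add j mu2"
        by blast
      then have "i div k = j div k"
        using count_k by metis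
      with \<open>i div k \<noteq> j div k\<close> show False ..
    qed
  qed
  moreover have "finite ?I"
    by simp
  ultimately have "card (\<Union>i\<in>?I. ?add i ` msets_with_mults K A (s - i))
      = (\<Sum>i\<in>?I. card (?add i ` msets_with_mults K A (s - i)))"
    using fin by (intro card_UN_disjoint) auto
  also have "\<dots> = (\<Sum>i\<in>?I. card (msets_with_mults K A (s - i)))"
    by (intro sum.cong refl card_image) (auto simp: inj_on_def)
  finally show "card (msets_with_mults (insert k K) A s)
      = (\<Sum>i | i \<le> s \<and> k dvd i \<and> A k (i div k). card (msets_with_mults K A (s - i)))"
    unfolding msets_with_mults_insert[OF k] .
  show "finite (msets_with_mults (insert k K) A s)"
    unfolding msets_with_mults_insert[OF k] using fin by simp
qed

lemma mults_gf_mult_nth: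
  "(mults_gf A k * f) $ s = (\<Sum>i | i \<le> s \<and> k dvd i \<and> A k (i div k). f $ (s - i))"
proof -
  have "(mults_gf A k * f) $ s = (\<Sum>i\<in>{0..s}. if k dvd i \<and> A k (i div k) then f $ (s - i) else 0)"
    unfolding fps_mult_nth by (intro sum.cong refl) (simp add: mults_gf_def)
  also have "\<dots> = (\<Sum>i | i \<le> s \<and> k dvd i \<and> A k (i div k). f $ (s - i))"
    by (subst sum.If_cases) (auto intro!: sum.cong)
  finally show ?thesis .
qed

theorem card_msets_with_mults:
  assumes "finite K" "0 \<notin> K"
  shows "finite (msets_with_mults K A s)"
    and "of_nat (card (msets_with_mults K A s)) = ((\<Prod>k\<in>K. mults_gf A k) :: 'a::comm_semiring_1 fps) $ s"
proof -
  have "finite (msets_with_mults K A s)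
      \<and> of_nat (card (msets_with_mults K A s)) = ((\<Prod>k\<in>K. mults_gf A k) :: 'a fps) $ s"
    using assms
  proof (induction K arbitrary: s rule: finite_induct)
    case empty
    then show ?case
      by (simp add: msets_with_mults_empty)
  next
    case (insert k K)
    then have k: "k \<notin> K" "0 < k" and fin: "\<And>t. finite (msets_with_mults K A t)"
      by auto
    show ?case
      using card_msets_with_mults_insert[OF k fin, of s] insert
      by (simp add: mults_gf_mult_nth)
  qed
  then show "finite (msets_with_mults K A s)"
    and "of_nat (card (msets_with_mults K A s)) = ((\<Prod>k\<in>K. mults_gf A k) :: 'a fps) $ s"
    by blast+
qed

section \<open>The pairs counted by \<open>c11\<close> as multisets with prescribed multiplicities\<close>

definition c11_mults :: "nat \<Rightarrow> nat \<Rightarrow> nat \<Rightarrow> bool" where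
  "c11_mults j k c \<longleftrightarrow> (odd k \<and> k < 2 * j \<longrightarrow> 1 \<le> c) \<and> (even k \<longrightarrow> c \<le> 1 \<and> (k \<le> 2 * j \<longrightarrow> c = 0))"

definition c11_indices :: "nat \<Rightarrow> nat set" where
  "c11_indices n = {j. 1 \<le> j \<and> 2 * j \<le> n + 1}"

lemma finite_c11_indices [simp]: "finite (c11_indices n)"
  unfolding c11_indices_def by (rule finite_subset[of _ "{..n + 1}"]) auto

lemma mem_le_sum_mset: "(x :: nat) \<in># lam \<Longrightarrow> x \<le> sum_mset lam"
proof -
  assume "x \<in># lam"
  then have "add_mset x (lam - {#x#}) = lam"
    by (rule insert_DiffM)
  moreover have "sum_mset (add_mset x (lam - {#x#})) = x + sum_mset (lam - {#x#})"
    by simp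
  ultimately have "sum_mset lam = x + sum_mset (lam - {#x#})"
    by simp
  then show ?thesis
    by simp
qed

lemma is_partition_iff: "is_partition n lam \<longleftrightarrow> set_mset lam \<subseteq> {1..n} \<and> sum_mset lam = n"
  unfolding is_partition_def using mem_le_sum_mset by fastforce

lemma c11_cond_imp_index: "c11_cond j lam \<Longrightarrow> is_partition n lam \<Longrightarrow> j \<in> c11_indices n"
proof -
  assume c: "c11_cond j lam" and p: "is_partition n lam"
  then have "1 \<le> j" "2 * j - 1 \<in># lam"
    unfolding c11_cond_def by auto
  then show ?thesis
    using p mem_le_sum_mset unfolding is_partition_def c11_indices_def by fastforce
qed

lemma c11_cond_iff_mults:
  assumes lam: "set_mset lam \<subseteq> {1..n}" and j: "j \<in> c11_indices n"
  shows "c11_cond j lam \<longleftrightarrow> (\<forall>k\<in>{1..n}. c11_mults j k (count lam k))"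
proof
  assume c: "c11_cond j lam"
  show "\<forall>k\<in>{1..n}. c11_mults j k (count lam k)"
  proof
    fix k
    have "1 \<le> count lam k" if "odd k" "k < 2 * j"
    proof -
      obtain i where i: "k = 2 * i + 1"
        using \<open>odd k\<close> by (auto elim: oddE)
      then have "Suc i \<in> {1..j}"
        using that by auto
      then have "2 * Suc i - 1 \<in># lam"
        using c unfolding c11_cond_def by blast
      then show ?thesis
        using i by simp
    qed
    moreover have "count lam k \<le> 1 \<and> (k \<le> 2 * j \<longrightarrow> count lam k = 0)" if "even k"
      using c that unfolding c11_cond_def by (cases "k \<in># lam") (auto simp: not_in_iff)
    ultimately show "c11_mults j k (count lam k)"
      unfolding c11_mults_def by auto
  qed
next
  assume A: "\<forall>k\<in>{1..n}. c11_mults j k (count lam k)"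
  have j1: "1 \<le> j" "2 * j \<le> n + 1"
    using j unfolding c11_indices_def by auto
  have "2 * i - 1 \<in># lam" if "i \<in> {1..j}" for i
    using A[rule_format, of "2 * i - 1"] that j1 by (simp add: c11_mults_def; arith)
  moreover have "2 * j < p \<and> count lam p = 1" if "p \<in># lam" "even p" for p
  proof -
    have "c11_mults j p (count lam p)"
      using A lam that by auto
    moreover have "0 < count lam p"
      using that by simp
    ultimately show ?thesis
      using \<open>even p\<close> unfolding c11_mults_def by (auto simp del: count_greater_zero_iff)
  qed
  ultimately show "c11_cond j lam"
    unfolding c11_cond_def using j1 by blast
qed

lemma c11_pairs_eq:
  "j \<in> c11_indices n
     \<Longrightarrow> {lam. is_partition n lam \<and> c11_cond j lam} = msets_with_mults {1..n} (c11_mults j) n"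
  using c11_cond_iff_mults by (auto simp: is_partition_iff msets_with_mults_def)

lemma c11_eq_sum: "c11 n = (\<Sum>j\<in>c11_indices n. card (msets_with_mults {1..n} (c11_mults j) n))"
proof -
  have "{(j, lam). is_partition n lam \<and> c11_cond j lam}
      = (\<Union>j\<in>c11_indices n. Pair j ` {lam. is_partition n lam \<and> c11_cond j lam})"
    using c11_cond_imp_index by blast
  also have "\<dots> = (\<Union>j\<in>c11_indices n. Pair j ` msets_with_mults {1..n} (c11_mults j) n)"
    by (simp add: c11_pairs_eq)
  finally have pairs: "{(j, lam). is_partition n lam \<and> c11_cond j lam}
      = (\<Union>j\<in>c11_indices n. Pair j ` msets_with_mults {1..n} (c11_mults j) n)" .
  have "finite (msets_with_mults {1..n} (c11_mults j) n)" for j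
    by (rule card_msets_with_mults(1)) auto
  then have "c11 n = (\<Sum>j\<in>c11_indices n. card (Pair j ` msets_with_mults {1..n} (c11_mults j) n))"
    unfolding c11_def pairs by (subst card_UN_disjoint) auto
  also have "\<dots> = (\<Sum>j\<in>c11_indices n. card (msets_with_mults {1..n} (c11_mults j) n))"
    by (intro sum.cong refl card_image) (auto simp: inj_on_def)
  finally show ?thesis .
qed

lemma of_nat_c11_eq:
  "(of_nat (c11 n) :: bit) = (\<Sum>j\<in>c11_indices n. (\<Prod>k\<in>{1..n}. mults_gf (c11_mults j) k :: fps2) $ n)"
  unfolding c11_eq_sum of_nat_sum by (intro sum.cong refl card_msets_with_mults(2)) auto

section \<open>The generating function of \<open>c11\<close> modulo 2\<close>

definition fps2_geometric :: "nat \<Rightarrow> fps2" where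
  "fps2_geometric k = Abs_fps (\<lambda>i. if k dvd i then 1 else 0)"

lemma fps2_geometric_mult: "0 < k \<Longrightarrow> fps2_geometric k * (1 + fps_X^k) = 1"
proof (rule fps_ext)
  fix i assume k: "0 < k"
  have "(fps2_geometric k * (1 + fps_X^k)) $ i = fps2_geometric k $ i + (fps2_geometric k * fps_X^k) $ i"
    by (simp add: algebra_simps)
  also have "\<dots> = (if k dvd i then 1 else 0) + (if i < k then 0 else if k dvd (i - k) then 1 else 0)"
    by (simp add: fps2_geometric_def fps_X_power_mult_right_nth)
  also have "\<dots> = (1 :: fps2) $ i"
  proof (cases "i < k")
    case True
    then have "k dvd i \<longleftrightarrow> i = 0"
      using k by (auto dest: dvd_imp_le)
    then show ?thesis
      using True by simp
  next
    case False
    then show ?thesis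
      using k by (simp add: dvd_minus_self)
  qed
  finally show "(fps2_geometric k * (1 + fps_X^k)) $ i = (1 :: fps2) $ i" .
qed

lemma mults_gf_all: "(\<And>c. A k c) \<Longrightarrow> mults_gf A k = fps2_geometric k"
  by (simp add: mults_gf_def fps2_geometric_def)

lemma mults_gf_pos:
  assumes "\<And>c. A k c \<longleftrightarrow> 1 \<le> c" "0 < k"
  shows "mults_gf A k = fps_X^k * fps2_geometric k"
proof (rule fps_ext)
  fix i
  have "k dvd i \<and> 1 \<le> i div k \<longleftrightarrow> k \<le> i \<and> k dvd (i - k)"
    using \<open>0 < k\<close> by (auto simp: dvd_minus_self div_greater_zero_iff Suc_le_eq)
  then show "mults_gf A k $ i = (fps_X^k * fps2_geometric k) $ i"
    using assms by (simp add: mults_gf_def fps2_geometric_def fps_X_power_mult_nth not_less)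
qed

lemma mults_gf_le_1:
  assumes "\<And>c. A k c \<longleftrightarrow> c \<le> 1" "0 < k"
  shows "mults_gf A k = (1 + fps_X^k :: 'a::comm_semiring_1 fps)"
proof (rule fps_ext)
  fix i
  have "k dvd i \<and> i div k \<le> 1 \<longleftrightarrow> i = 0 \<or> i = k"
    using \<open>0 < k\<close> by (auto elim!: dvdE simp: le_Suc_eq)
  then show "mults_gf A k $ i = (1 + fps_X^k :: 'a fps) $ i"
    using assms by (auto simp: mults_gf_def)
qed

lemma mults_gf_0:
  assumes "\<And>c. A k c \<longleftrightarrow> c = 0" "0 < k"
  shows "mults_gf A k = (1 :: 'a::comm_semiring_1 fps)"
proof (rule fps_ext)
  fix i
  have "k dvd i \<and> i div k = 0 \<longleftrightarrow> i = 0"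
    using \<open>0 < k\<close> by (auto elim: dvdE)
  then show "mults_gf A k $ i = (1 :: 'a fps) $ i"
    using assms by (auto simp: mults_gf_def)
qed

lemma mults_gf_c11_mults:
  assumes "0 < k"
  shows "(mults_gf (c11_mults j) k :: fps2)
    = (if odd k \<and> k < 2 * j then fps_X^k else 1) * (if odd k then fps2_geometric k else 1)
      * (if even k \<and> 2 * j < k then 1 + fps_X^k else 1)"
proof (cases "odd k")
  case True
  then show ?thesis
  proof (cases "k < 2 * j")
    case True
    have "mults_gf (c11_mults j) k = (fps_X^k * fps2_geometric k :: fps2)"
      by (rule mults_gf_pos) (use assms \<open>odd k\<close> True in \<open>auto simp: c11_mults_def\<close>)
    then show ?thesis
      using \<open>odd k\<close> True by simp
  next
    case False
    have "mults_gf (c11_mults j) k = fps2_geometric k"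
      by (rule mults_gf_all) (use \<open>odd k\<close> False in \<open>auto simp: c11_mults_def\<close>)
    then show ?thesis
      using \<open>odd k\<close> False by simp
  qed
next
  case False
  then have "even k"
    by simp
  show ?thesis
  proof (cases "2 * j < k")
    case True
    have "mults_gf (c11_mults j) k = (1 + fps_X^k :: fps2)"
      by (rule mults_gf_le_1) (use assms \<open>even k\<close> True in \<open>auto simp: c11_mults_def\<close>)
    then show ?thesis
      using \<open>even k\<close> True by simp
  next
    case False
    have "mults_gf (c11_mults j) k = (1 :: fps2)"
      by (rule mults_gf_0) (use assms \<open>even k\<close> False in \<open>auto simp: c11_mults_def\<close>)
    then show ?thesis
      using \<open>even k\<close> False by simp
  qed
qed

definition odds_geometric :: "nat \<Rightarrow> fps2" where
  "odds_geometric n = (\<Prod>k\<in>odds_upto n. fps2_geometric k)"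

definition large_evens :: "nat \<Rightarrow> nat \<Rightarrow> nat set" where
  "large_evens n j = {k \<in> {1..n}. even k \<and> 2 * j < k}"

lemma odds_geometric_mult: "odds_geometric n * prodX (odds_upto n) = 1"
proof -
  have "odds_geometric n * prodX (odds_upto n) = (\<Prod>k\<in>odds_upto n. fps2_geometric k * (1 + fps_X^k))"
    unfolding odds_geometric_def prodX_def by (simp add: prod.distrib)
  also have "\<dots> = 1"
    by (intro prod.neutral ballI fps2_geometric_mult) (auto simp: odds_upto_def)
  finally show ?thesis .
qed

lemma sum_odd_below: "(\<Sum>k | odd k \<and> k < 2 * j. k) = j * (j :: nat)"
proof -
  have "{k. odd k \<and> k < 2 * j} = (\<lambda>i. 2 * i + 1) ` {..<j}"
    by (auto elim!: oddE)
  then have "(\<Sum>k | odd k \<and> k < 2 * j. k) = (\<Sum>i<j. 2 * i + 1)"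
    by (simp add: sum.reindex inj_on_def)
  also have "\<dots> = j * j"
    by (induction j) auto
  finally show ?thesis .
qed

lemma prod_mults_gf_c11_mults:
  assumes j: "j \<in> c11_indices n"
  shows "(\<Prod>k\<in>{1..n}. mults_gf (c11_mults j) k :: fps2)
    = fps_X^(j * j) * odds_geometric n * prodX (large_evens n j)"
proof -
  have "(\<Prod>k\<in>{1..n}. mults_gf (c11_mults j) k :: fps2)
      = (\<Prod>k\<in>{1..n}. if odd k \<and> k < 2 * j then fps_X^k else 1)
        * (\<Prod>k\<in>{1..n}. if odd k then fps2_geometric k else 1)
        * (\<Prod>k\<in>{1..n}. if even k \<and> 2 * j < k then 1 + fps_X^k else 1)"
    by (simp add: mults_gf_c11_mults prod.distrib)
  also have "(\<Prod>k\<in>{1..n}. if odd k \<and> k < 2 * j then fps_X^k else 1) = (fps_X^(j * j) :: fps2)"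
  proof -
    have "{k \<in> {1..n}. odd k \<and> k < 2 * j} = {k. odd k \<and> k < 2 * j}"
      using j by (auto simp: c11_indices_def elim!: oddE)
    then show ?thesis
      by (simp add: prod.inter_filter[symmetric] power_sum[symmetric] sum_odd_below)
  qed
  also have "(\<Prod>k\<in>{1..n}. if odd k then fps2_geometric k else 1) = odds_geometric n"
    unfolding odds_geometric_def odds_upto_def by (rule prod.inter_filter[symmetric]) simp
  also have "(\<Prod>k\<in>{1..n}. if even k \<and> 2 * j < k then 1 + fps_X^k else 1) = (prodX (large_evens n j) :: fps2)"
    unfolding prodX_def large_evens_def by (rule prod.inter_filter[symmetric]) simp
  finally show ?thesis .
qed

lemma qpochhammer_X2_nth_0 [simp]: "qpochhammer (fps_X^2 :: fps2) j $ 0 = 1"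
  by (simp add: qpochhammer_X_power_fps2 image_iff)

lemma cong_X_prodX_large_evens:
  "cong_X (Suc n) (prodX (large_evens n j))
     (prodX (multiples_upto 2 n) * inverse (qpochhammer (fps_X^2 :: fps2) j))"
proof -
  have "prodX (large_evens n j) * qpochhammer (fps_X^2 :: fps2) j
      = prodX (large_evens n j \<union> (\<lambda>k. 2 * k) ` {1..j})"
    unfolding qpochhammer_X_power_fps2[OF zero_less_numeral]
    by (rule prodX_union[symmetric]) (auto simp: large_evens_def)
  also have "cong_X (Suc n) \<dots> (prodX (multiples_upto 2 n))"
  proof (rule cong_X_prodX)
    show "(large_evens n j \<union> (\<lambda>k. 2 * k) ` {1..j}) \<inter> {..<Suc n} = multiples_upto 2 n \<inter> {..<Suc n}"
      by (auto simp: large_evens_def multiples_upto_def elim!: evenE)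
  qed (auto simp: large_evens_def multiples_upto_def)
  finally have "cong_X (Suc n) (prodX (large_evens n j) * qpochhammer (fps_X^2) j
        * inverse (qpochhammer (fps_X^2 :: fps2) j))
      (prodX (multiples_upto 2 n) * inverse (qpochhammer (fps_X^2 :: fps2) j))"
    by (rule cong_X_mult) simp
  then show ?thesis
    by (simp add: mult.assoc inverse_mult_eq_1')
qed

definition euler_term :: "nat \<Rightarrow> fps2" where
  "euler_term i = fps_X^(i * i) * inverse (qpochhammer (fps_X^2) i)"

lemma cong_X_euler_term:
  assumes i: "i \<le> n"
  shows "cong_X (Suc n) (fps_X^i * (fps_X^2)^(i choose 2) * qbinomial (fps_X^2) n i) (euler_term i)"
proof -
  let ?P = "qpochhammer (fps_X^2 :: fps2) i"
  have square: "fps_X^i * (fps_X^2 :: fps2)^(i choose 2) = fps_X^(i * i)"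
    using double_choose_two[of i] by (simp add: power_add[symmetric] power_mult[symmetric])
  have "qbinomial (fps_X^2) n i - inverse ?P = inverse ?P * (?P * qbinomial (fps_X^2) n i - 1)"
    by (simp add: right_diff_distrib mult.assoc[symmetric] inverse_mult_eq_1)
  with qpochhammer_mult_qbinomial_dvd[OF i, of "fps_X^2 :: fps2"]
  have "cong_X (2 * (Suc n - i)) (qbinomial (fps_X^2) n i) (inverse ?P)"
    unfolding cong_X_def by (simp add: power_mult)
  then have "cong_X (i * i + 2 * (Suc n - i))
      (fps_X^(i * i) * qbinomial (fps_X^2) n i) (fps_X^(i * i) * inverse ?P)"
    by (rule cong_X_mult_X_power)
  moreover have "Suc n \<le> i * i + 2 * (Suc n - i)"
    using i le_square[of i] by linarith
  ultimately have "cong_X (Suc n) (fps_X^(i * i) * qbinomial (fps_X^2) n i) (fps_X^(i * i) * inverse ?P)"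
    by (rule cong_X_mono)
  then show ?thesis
    unfolding euler_term_def square .
qed

lemma cong_X_euler_term_0: "Suc n \<le> i * i \<Longrightarrow> cong_X (Suc n) (euler_term i) 0"
  unfolding cong_X_def euler_term_def diff_zero by (intro dvd_mult2 le_imp_power_dvd)

lemma qbinomial_sum_cong_X_euler_terms:
  "cong_X (Suc n) (\<Sum>i\<le>n. fps_X^i * (fps_X^2)^(i choose 2) * qbinomial (fps_X^2 :: fps2) n i)
     (1 + (\<Sum>j\<in>c11_indices n. euler_term j))"
proof -
  let ?S = "insert 0 (c11_indices n)"
  have "cong_X (Suc n) (fps_X^i * (fps_X^2)^(i choose 2) * qbinomial (fps_X^2) n i)
      (if i \<in> ?S then euler_term i else 0)" if "i \<le> n" for i
  proof (cases "i \<in> ?S")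
    case False
    then have "2 \<le> i" "n + 1 < 2 * i"
      using that unfolding c11_indices_def by auto
    then have "Suc n \<le> i * i"
      using mult_le_mono1[of 2 i i] by linarith
    then show ?thesis
      using False cong_X_trans[OF cong_X_euler_term[OF that] cong_X_euler_term_0] by simp
  qed (use cong_X_euler_term[OF that] in simp)
  then have "cong_X (Suc n) (\<Sum>i\<le>n. fps_X^i * (fps_X^2)^(i choose 2) * qbinomial (fps_X^2) n i)
      (\<Sum>i\<le>n. if i \<in> ?S then euler_term i else 0)"
    by (intro cong_X_sum) simp
  also have "?S \<subseteq> {..n}"
    by (auto simp: c11_indices_def)
  then have "(\<Sum>i\<le>n. if i \<in> ?S then euler_term i else 0) = (\<Sum>i\<in>?S. euler_term i)"
    unfolding sum.inter_restrict[OF finite_atMost, symmetric] by (simp add: Int_absorb1)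
  also have "\<dots> = euler_term 0 + (\<Sum>j\<in>c11_indices n. euler_term j)"
    by (rule sum.insert[OF finite_c11_indices]) (simp add: c11_indices_def)
  also have "euler_term 0 = 1"
    by (simp add: euler_term_def)
  finally show ?thesis .
qed

text \<open>Euler's identity \<open>\<Sum>_j q^(j^2)/(q^2;q^2)_j = \<Prod>_k (1 + q^(2k+1))\<close> modulo 2, truncated at
  order \<open>n\<close>; it is the \<open>q \<mapsto> X^2\<close>, \<open>a = X\<close> case of the \<open>q\<close>-binomial theorem.\<close>

theorem euler_identity_cong_X:
  "cong_X (Suc n) (\<Sum>j\<in>c11_indices n. euler_term j) (prodX (odds_upto n) + 1)"
proof -
  have "(\<Sum>i\<le>n. fps_X^i * (fps_X^2)^(i choose 2) * qbinomial (fps_X^2 :: fps2) n i)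
      = (\<Prod>k<n. 1 + fps_X * (fps_X^2 :: fps2)^k)"
    by (rule qbinomial_theorem[symmetric])
  also have "\<dots> = prodX ((\<lambda>k. 2 * k + 1) ` {..<n})"
    by (subst prodX_image) (auto simp: inj_on_def power_add mult.commute simp flip: power_mult)
  also have "cong_X (Suc n) \<dots> (prodX (odds_upto n))"
    by (rule cong_X_prodX) (auto simp: odds_upto_def elim!: oddE)
  finally have "cong_X (Suc n) (1 + (\<Sum>j\<in>c11_indices n. euler_term j)) (prodX (odds_upto n))"
    using qbinomial_sum_cong_X_euler_terms by (blast intro: cong_X_trans cong_X_sym)
  from cong_X_add[OF this cong_X_refl[of _ 1]] show ?thesis
    by (simp add: ac_simps)
qed

lemma cong_X_odds_geometric_mult_evens:
  "cong_X (Suc n) (odds_geometric n * prodX (multiples_upto 2 n)) (euler_product n ^ 3)"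
proof -
  have Og_Phi: "odds_geometric n * euler_product n = prodX (multiples_upto 2 n)"
    using odds_geometric_mult[of n] by (simp add: euler_product_split mult.assoc[symmetric])
  have "cong_X (Suc n) (odds_geometric n * prodX (multiples_upto 2 n)) (odds_geometric n * euler_product n ^ 2)"
    by (intro cong_X_mult cong_X_refl cong_X_prodX_evens)
  also have "odds_geometric n * euler_product n ^ 2 = prodX (multiples_upto 2 n) * euler_product n"
    using Og_Phi by (simp add: power2_eq_square mult.assoc[symmetric])
  also have "cong_X (Suc n) \<dots> (euler_product n ^ 2 * euler_product n)"
    by (intro cong_X_mult cong_X_refl cong_X_prodX_evens)
  finally show ?thesis
    by (simp add: power2_eq_square power3_eq_cube)
qed

lemma cong_X_sum_c11_gf:
  "cong_X (Suc n) (\<Sum>j\<in>c11_indices n. \<Prod>k\<in>{1..n}. mults_gf (c11_mults j) k :: fps2)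
     (odds_geometric n * prodX (multiples_upto 2 n) * (prodX (odds_upto n) + 1))"
proof -
  let ?E = "prodX (multiples_upto 2 n)"
  have "cong_X (Suc n) (\<Sum>j\<in>c11_indices n. \<Prod>k\<in>{1..n}. mults_gf (c11_mults j) k :: fps2)
      (\<Sum>j\<in>c11_indices n. odds_geometric n * ?E * euler_term j)"
  proof (rule cong_X_sum)
    fix j assume j: "j \<in> c11_indices n"
    have "cong_X (Suc n) (fps_X^(j * j) * odds_geometric n * prodX (large_evens n j))
        (fps_X^(j * j) * odds_geometric n * (?E * inverse (qpochhammer (fps_X^2) j)))"
      by (intro cong_X_mult cong_X_refl cong_X_prodX_large_evens)
    then show "cong_X (Suc n) (\<Prod>k\<in>{1..n}. mults_gf (c11_mults j) k) (odds_geometric n * ?E * euler_term j)"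
      unfolding prod_mults_gf_c11_mults[OF j] euler_term_def by (simp add: mult_ac)
  qed
  also have "(\<Sum>j\<in>c11_indices n. odds_geometric n * ?E * euler_term j)
      = odds_geometric n * ?E * (\<Sum>j\<in>c11_indices n. euler_term j)"
    by (simp add: sum_distrib_left)
  also have "cong_X (Suc n) \<dots> (odds_geometric n * ?E * (prodX (odds_upto n) + 1))"
    by (intro cong_X_mult cong_X_refl euler_identity_cong_X)
  finally show ?thesis .
qed

text \<open>With \<open>O\<close>, \<open>E\<close> the products over odd and even parts, the sum over \<open>j\<close> is \<open>E (1 + 1/O)\<close>;
  since \<open>E \<equiv> \<Phi>\<^sup>2\<close> and \<open>O E = \<Phi>\<close> modulo 2, this is \<open>\<Phi>\<^sup>2 + \<Phi>\<^sup>3\<close>.\<close>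

theorem c11_mod_2: "(of_nat (c11 n) :: bit) = (euler_product n ^ 2) $ n + (euler_product n ^ 3) $ n"
proof -
  let ?E = "prodX (multiples_upto 2 n)"
  note cong_X_sum_c11_gf
  also have "odds_geometric n * ?E * (prodX (odds_upto n) + 1) = ?E + odds_geometric n * ?E"
    using odds_geometric_mult[of n] by (simp add: algebra_simps)
  also have "cong_X (Suc n) \<dots> (euler_product n ^ 2 + euler_product n ^ 3)"
    by (intro cong_X_add cong_X_prodX_evens cong_X_odds_geometric_mult_evens)
  finally have "cong_X (Suc n) (\<Sum>j\<in>c11_indices n. \<Prod>k\<in>{1..n}. mults_gf (c11_mults j) k)
      (euler_product n ^ 2 + euler_product n ^ 3)" .
  from cong_X_nth[OF this, of n] show ?thesis
    unfolding of_nat_c11_eq by (simp add: fps_sum_nth)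
qed

lemma even_c11: "n mod 11 \<in> {5, 7, 9} \<Longrightarrow> even (c11 n)"
  using c11_mod_2[of n] euler_product_square_nth_eq_0 euler_product_cube_nth_eq_0
  by (simp flip: even_of_nat_iff[where 'a=bit])

theorem mainTheorem12:
  fixes n :: nat
  shows "even (c11 (11 * n + 5)) \<and> even (c11 (11 * n + 7)) \<and> even (c11 (11 * n + 9))"
  by (intro conjI even_c11) simp_all

end
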